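(* Let $\eta_0,\eta_1,\dots$, $\mathbf{I}^\Omega$ and $\boldsymbol{\eta}^\Omega$ be as below. There exists a closed λ-term $\mathsf{Eq}$ such that for all $n\in\mathbb{N}$: $\mathsf{Eq}\,\underline{n}\,\mathbf{I}^\Omega=_\mathcal{B}\mathtt{I}$ and $\mathsf{Eq}\,\underline{n}\,\boldsymbol{\eta}^\Omega=_\mathcal{B}\eta_n$.
   Context: $\mathtt{I}=\lambda x.x$, $\Omega=(\lambda x.xx)(\lambda x.xx)$, $\underline n=\lambda fz.f^n(z)$ the Church numeral, $[M_1,\dots,M_n]=\lambda z.zM_1\cdots M_n$ ($z$ fresh), and for an effective enumeration $(M_n)_n$ (i.e. some closed $F$ has $F\underline n=_\beta M_n$) the stream $[M_n]_{n\in\mathbb{N}}$ is a λ-term with $[M_n]_{n\in\mathbb{N}}=_\beta[M_0,[M_{n+1}]_{n\in\mathbb{N}}]$. $\eta_0,\eta_1,\dots$ is an effective enumeration of closed λ-terms with $\eta_i\twoheadrightarrow_{\beta\eta}\mathtt{I}$ (finite η-expansions of the identity). $\mathbf{I}^\Omega$, $\boldsymbol{\eta}^\Omega$ are closed terms with $\mathbf{I}^\Omega yx=_\beta[y\Omega^{\sim n}x]_{n\in\mathbb{N}}$ and $\boldsymbol{\eta}^\Omega yx=_\beta[y\Omega^{\sim n}(\eta_nx)]_{n\in\mathbb{N}}$, where $y\Omega^{\sim n}$ is $y$ applied to $n$ copies of $\Omega$. $M=_\mathcal{B}N$ iff $BT(M)=BT(N)$. *)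

theory Defs
  imports Main
begin

datatype lterm = Var nat | App lterm lterm | Abs lterm

primrec lift :: "lterm \<Rightarrow> nat \<Rightarrow> lterm" where
  "lift (Var i) k = (if i < k then Var i else Var (i + 1))"
| "lift (App s t) k = App (lift s k) (lift t k)"
| "lift (Abs s) k = Abs (lift s (k + 1))"

primrec subst :: "lterm \<Rightarrow> lterm \<Rightarrow> nat \<Rightarrow> lterm" where
  "subst (Var i) s k = (if k < i then Var (i - 1) else if i = k then s else Var i)"
| "subst (App t u) s k = App (subst t s k) (subst u s k)"
| "subst (Abs t) s k = Abs (subst t (lift s 0) (k + 1))"

primrec closed_at :: "nat \<Rightarrow> lterm \<Rightarrow> bool" where
  "closed_at n (Var i) = (i < n)"
| "closed_at n (App s t) = (closed_at n s \<and> closed_at n t)"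
| "closed_at n (Abs s) = closed_at (Suc n) s"

definition closed :: "lterm \<Rightarrow> bool" where
  "closed t = closed_at 0 t"

inductive beta :: "lterm \<Rightarrow> lterm \<Rightarrow> bool" where
  beta_redex: "beta (App (Abs s) t) (subst s t 0)"
| beta_appL: "beta s s' \<Longrightarrow> beta (App s t) (App s' t)"
| beta_appR: "beta t t' \<Longrightarrow> beta (App s t) (App s t')"
| beta_abs: "beta s s' \<Longrightarrow> beta (Abs s) (Abs s')"

text \<open>One-step eta reduction: \<lambda>x. s x \<rightarrow> s, x not free in s (compatible closure).\<close>
inductive eta :: "lterm \<Rightarrow> lterm \<Rightarrow> bool" where
  eta_redex: "eta (Abs (App (lift s 0) (Var 0))) s"
| eta_appL: "eta s s' \<Longrightarrow> eta (App s t) (App s' t)"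
| eta_appR: "eta t t' \<Longrightarrow> eta (App s t) (App s t')"
| eta_abs: "eta s s' \<Longrightarrow> eta (Abs s) (Abs s')"

definition beta_eta_red :: "lterm \<Rightarrow> lterm \<Rightarrow> bool" where
  "beta_eta_red = (\<lambda>s t. beta s t \<or> eta s t)\<^sup>*\<^sup>*"

definition beta_eq :: "lterm \<Rightarrow> lterm \<Rightarrow> bool" (infix "=\<^sub>\<beta>" 50) where
  "beta_eq = equivclp beta"

definition apps :: "lterm \<Rightarrow> lterm list \<Rightarrow> lterm" where
  "apps t ts = foldl App t ts"

definition lams :: "nat \<Rightarrow> lterm \<Rightarrow> lterm" where
  "lams n t = (Abs ^^ n) t"

definition Iterm :: lterm where "Iterm = Abs (Var 0)"

definition Omega :: lterm where
  "Omega = App (Abs (App (Var 0) (Var 0))) (Abs (App (Var 0) (Var 0)))"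

definition church :: "nat \<Rightarrow> lterm" where
  "church n = Abs (Abs ((App (Var 1) ^^ n) (Var 0)))"

text \<open>Pairing [M,N] = \<lambda>z. z M N, z fresh.\<close>
definition lpair :: "lterm \<Rightarrow> lterm \<Rightarrow> lterm" where
  "lpair M N = Abs (App (App (Var 0) (lift M 0)) (lift N 0))"

definition is_stream_family :: "(nat \<Rightarrow> lterm) \<Rightarrow> (nat \<Rightarrow> lterm) \<Rightarrow> bool" where
  "is_stream_family M S = (\<forall>k. S k =\<^sub>\<beta> lpair (M k) (S (Suc k)))"

text \<open>Head normal form \<lambda>x1..xn. h P1 .. Pk, with de Bruijn head index h.\<close>
definition has_hnf :: "lterm \<Rightarrow> bool" where
  "has_hnf M = (\<exists>n h args. M =\<^sub>\<beta> lams n (apps (Var h) args))"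

definition hnf_of :: "lterm \<Rightarrow> nat \<times> nat \<times> lterm list" where
  "hnf_of M = (SOME (n, h, args). M =\<^sub>\<beta> lams n (apps (Var h) args))"

codatatype bt = Bot | Node (bt_lams: nat) (bt_head: nat) (bt_args: "bt list")

primcorec BT :: "lterm \<Rightarrow> bt" where
  "BT M = (if \<not> has_hnf M then Bot
           else Node (fst (hnf_of M)) (fst (snd (hnf_of M))) (map BT (snd (snd (hnf_of M)))))"

definition B_eq :: "lterm \<Rightarrow> lterm \<Rightarrow> bool" (infix "=\<^sub>\<B>" 50) where
  "B_eq M N = (BT M = BT N)"

end

theory Submission
  imports Defs
begin

text \<open>
  Take \<open>Eq = \<lambda>n t x. hd (n tl (t (n K I) x))\<close>. The term \<open>n K I\<close> is the selector
  \<open>\<lambda>x\<^sub>0 \<dots> x\<^sub>n. x\<^sub>n\<close>, so the \<open>n\<close>-th entry of the stream \<open>t (n K I) x\<close> is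
  \<open>(n K I) \<Omega>\<^sup>n X\<^sub>n =\<^sub>\<beta> X\<^sub>n\<close>, where \<open>X\<^sub>n = x\<close> for \<open>t = I\<^sup>\<Omega>\<close> and \<open>X\<^sub>n = \<eta>\<^sub>n x\<close> for \<open>t = \<eta>\<^sup>\<Omega>\<close>.
  Hence \<open>Eq n I\<^sup>\<Omega> =\<^sub>\<beta> \<lambda>x. x\<close> and \<open>Eq n \<eta>\<^sup>\<Omega> =\<^sub>\<beta> \<lambda>x. \<eta>\<^sub>n x\<close>. The last term is
  \<open>\<beta>\<close>-convertible to \<open>\<eta>\<^sub>n\<close> because, by \<open>\<eta>\<close>-postponement, a term \<open>\<beta>\<eta>\<close>-reducing to
  \<open>I\<close> already \<open>\<beta>\<close>-reduces to an abstraction.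
\<close>

lemma lift_lift:
  "i < k + 1 \<Longrightarrow> lift (lift t i) (Suc k) = lift (lift t k) i"
  by (induct t arbitrary: i k) auto

lemma lift_subst [simp]:
  "j < i + 1 \<Longrightarrow> lift (subst t s j) i = subst (lift t (i + 1)) (lift s i) j"
  by (induct t arbitrary: i j s) (auto simp add: lift_lift split: nat.split)

lemma lift_subst_lt:
  "i < j + 1 \<Longrightarrow> lift (subst t s j) i = subst (lift t i) (lift s i) (j + 1)"
  by (induct t arbitrary: i j s) (auto simp add: lift_lift)

lemma subst_lift [simp]: "subst (lift t k) s k = t"
  by (induct t arbitrary: k s) simp_all

lemma subst_lift_Var: "subst (lift t (Suc k)) (Var k) k = t"
  by (induct t arbitrary: k) auto

lemma closed_at_mono: "closed_at k t \<Longrightarrow> k \<le> j \<Longrightarrow> closed_at j t"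
  by (induct t arbitrary: k j) auto

lemma lift_closed_at: "closed_at k t \<Longrightarrow> k \<le> j \<Longrightarrow> lift t j = t"
  by (induct t arbitrary: k j) auto

lemma subst_closed_at: "closed_at k t \<Longrightarrow> k \<le> j \<Longrightarrow> subst t s j = t"
  by (induct t arbitrary: k j s) auto

lemma lift_closed [simp]: "closed t \<Longrightarrow> lift t j = t"
  unfolding closed_def by (rule lift_closed_at) auto

lemma subst_closed [simp]: "closed t \<Longrightarrow> subst t s j = t"
  unfolding closed_def by (rule subst_closed_at) auto

abbreviation beta_red (infix "\<rightarrow>\<^sub>\<beta>\<^sup>*" 50) where "beta_red \<equiv> beta\<^sup>*\<^sup>*"

lemma beta_lift: "beta s t \<Longrightarrow> beta (lift s k) (lift t k)"
proof (induct arbitrary: k rule: beta.induct)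
  case (beta_redex s t)
  then show ?case using beta.beta_redex[of "lift s (Suc k)" "lift t k"] by simp
qed (auto intro: beta.intros)

lemma beta_red_lift: "s \<rightarrow>\<^sub>\<beta>\<^sup>* t \<Longrightarrow> lift s k \<rightarrow>\<^sub>\<beta>\<^sup>* lift t k"
  by (induct rule: rtranclp_induct) (auto intro: rtranclp.rtrancl_into_rtrancl beta_lift)

lemma beta_red_App: "s \<rightarrow>\<^sub>\<beta>\<^sup>* s' \<Longrightarrow> t \<rightarrow>\<^sub>\<beta>\<^sup>* t' \<Longrightarrow> App s t \<rightarrow>\<^sub>\<beta>\<^sup>* App s' t'"
proof -
  assume s: "s \<rightarrow>\<^sub>\<beta>\<^sup>* s'" and t: "t \<rightarrow>\<^sub>\<beta>\<^sup>* t'"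
  from s have "App s t \<rightarrow>\<^sub>\<beta>\<^sup>* App s' t"
    by (induct rule: rtranclp_induct) (auto intro: rtranclp.rtrancl_into_rtrancl beta.intros)
  also from t have "App s' t \<rightarrow>\<^sub>\<beta>\<^sup>* App s' t'"
    by (induct rule: rtranclp_induct) (auto intro: rtranclp.rtrancl_into_rtrancl beta.intros)
  finally show ?thesis .
qed

lemma beta_red_Abs: "s \<rightarrow>\<^sub>\<beta>\<^sup>* s' \<Longrightarrow> Abs s \<rightarrow>\<^sub>\<beta>\<^sup>* Abs s'"
  by (induct rule: rtranclp_induct) (auto intro: rtranclp.rtrancl_into_rtrancl beta.intros)

lemma beta_eq_refl [simp]: "x =\<^sub>\<beta> x"
  by (simp add: beta_eq_def)

lemma beta_eq_sym: "x =\<^sub>\<beta> y \<Longrightarrow> y =\<^sub>\<beta> x"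
  by (simp add: beta_eq_def equivclp_sym)

lemma beta_eq_trans [trans]: "x =\<^sub>\<beta> y \<Longrightarrow> y =\<^sub>\<beta> z \<Longrightarrow> x =\<^sub>\<beta> z"
  unfolding beta_eq_def by (rule equivclp_trans)

lemma beta_red_imp_beta_eq: "x \<rightarrow>\<^sub>\<beta>\<^sup>* y \<Longrightarrow> x =\<^sub>\<beta> y"
  unfolding beta_eq_def by (rule rtranclp_into_equivclp)

lemma beta_eq_redex: "App (Abs s) t =\<^sub>\<beta> subst s t 0"
  unfolding beta_eq_def by (blast intro: beta.beta_redex)

lemma beta_eq_cong:
  assumes "\<And>x y. beta x y \<Longrightarrow> beta (f x) (f y)" and "x =\<^sub>\<beta> y"
  shows "f x =\<^sub>\<beta> f y"
  using assms(2) unfolding beta_eq_def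
  by (induct rule: equivclp_induct) (auto intro: equivclp_into_equivclp assms(1))

lemma beta_eq_AppL: "x =\<^sub>\<beta> y \<Longrightarrow> App x t =\<^sub>\<beta> App y t"
  by (rule beta_eq_cong[where f="\<lambda>x. App x t"]) (auto intro: beta.intros)

lemma beta_eq_AppR: "x =\<^sub>\<beta> y \<Longrightarrow> App t x =\<^sub>\<beta> App t y"
  by (rule beta_eq_cong[where f="\<lambda>x. App t x"]) (auto intro: beta.intros)

lemma beta_eq_Abs: "x =\<^sub>\<beta> y \<Longrightarrow> Abs x =\<^sub>\<beta> Abs y"
  by (rule beta_eq_cong[where f=Abs]) (auto intro: beta.intros)

lemma beta_eq_apps: "y =\<^sub>\<beta> y' \<Longrightarrow> apps y args =\<^sub>\<beta> apps y' args"
  by (induct args arbitrary: y y') (auto simp: apps_def beta_eq_AppL)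

lemma beta_eq_imp_B_eq: "M =\<^sub>\<beta> N \<Longrightarrow> M =\<^sub>\<B> N"
proof -
  assume "M =\<^sub>\<beta> N"
  then have same_class: "\<And>X. (M =\<^sub>\<beta> X) = (N =\<^sub>\<beta> X)"
    using beta_eq_sym beta_eq_trans by blast
  have "has_hnf M = has_hnf N" unfolding has_hnf_def same_class ..
  moreover have "hnf_of M = hnf_of N" unfolding hnf_of_def same_class ..
  ultimately show ?thesis unfolding B_eq_def by (subst (1 2) BT.code) simp
qed

section \<open>Eta postponement\<close>

inductive par_eta :: "lterm \<Rightarrow> lterm \<Rightarrow> bool" (infix "\<Rrightarrow>\<^sub>\<eta>" 50) where
  par_eta_Var: "Var i \<Rrightarrow>\<^sub>\<eta> Var i"
| par_eta_App: "s \<Rrightarrow>\<^sub>\<eta> s' \<Longrightarrow> t \<Rrightarrow>\<^sub>\<eta> t' \<Longrightarrow> App s t \<Rrightarrow>\<^sub>\<eta> App s' t'"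
| par_eta_Abs: "s \<Rrightarrow>\<^sub>\<eta> s' \<Longrightarrow> Abs s \<Rrightarrow>\<^sub>\<eta> Abs s'"
| par_eta_redex: "s \<Rrightarrow>\<^sub>\<eta> s' \<Longrightarrow> Abs (App (lift s 0) (Var 0)) \<Rrightarrow>\<^sub>\<eta> s'"

lemma par_eta_refl [simp]: "t \<Rrightarrow>\<^sub>\<eta> t"
  by (induct t) (auto intro: par_eta.intros)

lemma eta_imp_par_eta: "eta s t \<Longrightarrow> s \<Rrightarrow>\<^sub>\<eta> t"
  by (induct rule: eta.induct) (auto intro: par_eta.intros)

lemma par_eta_lift: "s \<Rrightarrow>\<^sub>\<eta> t \<Longrightarrow> lift s k \<Rrightarrow>\<^sub>\<eta> lift t k"
proof (induct arbitrary: k rule: par_eta.induct)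
  case (par_eta_redex s s')
  then show ?case
    using par_eta.par_eta_redex[of "lift s k" "lift s' k"] by (simp add: lift_lift)
qed (auto intro: par_eta.intros)

lemma par_eta_subst: "s \<Rrightarrow>\<^sub>\<eta> s' \<Longrightarrow> t \<Rrightarrow>\<^sub>\<eta> t' \<Longrightarrow> subst s t k \<Rrightarrow>\<^sub>\<eta> subst s' t' k"
proof (induct arbitrary: t t' k rule: par_eta.induct)
  case (par_eta_redex s s')
  then show ?case
    using par_eta.par_eta_redex[of "subst s t k" "subst s' t' k"]
    by (simp add: par_eta_lift lift_subst_lt)
next
  case (par_eta_Abs s s')
  then show ?case by (simp add: par_eta.par_eta_Abs par_eta_lift)
qed (auto intro: par_eta.intros)

lemma par_eta_redex_postpone:
  "s \<Rrightarrow>\<^sub>\<eta> Abs b \<Longrightarrow> m \<Rrightarrow>\<^sub>\<eta> n \<Longrightarrow> \<exists>L. App s m \<rightarrow>\<^sub>\<beta>\<^sup>* L \<and> L \<Rrightarrow>\<^sub>\<eta> subst b n 0"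
proof (induct s "Abs b" arbitrary: b rule: par_eta.induct)
  case par_eta_Abs
  then show ?case by (meson beta_redex par_eta_subst r_into_rtranclp)
next
  case (par_eta_redex s)
  have "beta (App (Abs (App (lift s 0) (Var 0))) m) (App s m)"
    using beta.beta_redex[of "App (lift s 0) (Var 0)" m] by simp
  with par_eta_redex show ?case by (meson converse_rtranclp_into_rtranclp)
qed

lemma par_eta_beta_postpone: "m \<Rrightarrow>\<^sub>\<eta> n \<Longrightarrow> beta n p \<Longrightarrow> \<exists>L. m \<rightarrow>\<^sub>\<beta>\<^sup>* L \<and> L \<Rrightarrow>\<^sub>\<eta> p"
proof (induct arbitrary: p rule: par_eta.induct)
  case par_eta_Var
  then show ?case by (auto elim: beta.cases)
next
  case (par_eta_App s s' t t')
  from par_eta_App.prems show ?case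
  proof (cases rule: beta.cases)
    case beta_redex
    then show ?thesis using par_eta_redex_postpone par_eta_App by auto
  next
    case (beta_appL s'')
    then obtain L where "s \<rightarrow>\<^sub>\<beta>\<^sup>* L" "L \<Rrightarrow>\<^sub>\<eta> s''" using par_eta_App by blast
    then show ?thesis using par_eta_App beta_appL
      by (meson beta_red_App par_eta.par_eta_App rtranclp.rtrancl_refl)
  next
    case (beta_appR t'')
    then obtain L where "t \<rightarrow>\<^sub>\<beta>\<^sup>* L" "L \<Rrightarrow>\<^sub>\<eta> t''" using par_eta_App by blast
    then show ?thesis using par_eta_App beta_appR
      by (meson beta_red_App par_eta.par_eta_App rtranclp.rtrancl_refl)
  qed
next
  case (par_eta_Abs s s')
  from par_eta_Abs.prems show ?case
  proof (cases rule: beta.cases)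
    case (beta_abs s'')
    then obtain L where "s \<rightarrow>\<^sub>\<beta>\<^sup>* L" "L \<Rrightarrow>\<^sub>\<eta> s''" using par_eta_Abs by blast
    then show ?thesis using beta_abs by (meson beta_red_Abs par_eta.par_eta_Abs)
  qed
next
  case (par_eta_redex s s')
  then obtain L where L: "s \<rightarrow>\<^sub>\<beta>\<^sup>* L" "L \<Rrightarrow>\<^sub>\<eta> p" by blast
  have "Abs (App (lift s 0) (Var 0)) \<rightarrow>\<^sub>\<beta>\<^sup>* Abs (App (lift L 0) (Var 0))"
    by (intro beta_red_Abs beta_red_App beta_red_lift L) auto
  then show ?case using L par_eta.par_eta_redex by blast
qed

lemma par_eta_beta_red_postpone:
  "n \<rightarrow>\<^sub>\<beta>\<^sup>* p \<Longrightarrow> m \<Rrightarrow>\<^sub>\<eta> n \<Longrightarrow> \<exists>L. m \<rightarrow>\<^sub>\<beta>\<^sup>* L \<and> L \<Rrightarrow>\<^sub>\<eta> p"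
proof (induct arbitrary: m rule: converse_rtranclp_induct)
  case (step y z)
  then obtain L where "m \<rightarrow>\<^sub>\<beta>\<^sup>* L" "L \<Rrightarrow>\<^sub>\<eta> z" using par_eta_beta_postpone by blast
  with step show ?case by (meson rtranclp_trans)
qed blast

lemma par_eta_to_Abs: "m \<Rrightarrow>\<^sub>\<eta> Abs s \<Longrightarrow> \<exists>t. m = Abs t"
  by (cases rule: par_eta.cases) auto

lemma beta_eta_red_Abs_imp_beta_red_Abs:
  assumes "beta_eta_red m (Abs u)"
  shows "\<exists>s. m \<rightarrow>\<^sub>\<beta>\<^sup>* Abs s"
  using assms unfolding beta_eta_red_def
proof (induct rule: converse_rtranclp_induct)
  case (step y z)
  then obtain s where s: "z \<rightarrow>\<^sub>\<beta>\<^sup>* Abs s" by blast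
  show ?case
  proof (cases "beta y z")
    case True
    with s show ?thesis by (meson converse_rtranclp_into_rtranclp)
  next
    case False
    with step have "y \<Rrightarrow>\<^sub>\<eta> z" using eta_imp_par_eta by blast
    then obtain L where "y \<rightarrow>\<^sub>\<beta>\<^sup>* L" "L \<Rrightarrow>\<^sub>\<eta> Abs s" using par_eta_beta_red_postpone s by blast
    then show ?thesis using par_eta_to_Abs by blast
  qed
qed blast

lemma eta_expansion_beta_eq:
  assumes "beta_eta_red E (Abs u)"
  shows "Abs (App (lift E 0) (Var 0)) =\<^sub>\<beta> E"
proof -
  obtain s where s: "E \<rightarrow>\<^sub>\<beta>\<^sup>* Abs s"
    using beta_eta_red_Abs_imp_beta_red_Abs assms by blast
  have "Abs (App (lift E 0) (Var 0)) =\<^sub>\<beta> Abs (App (Abs (lift s 1)) (Var 0))"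
    using beta_red_imp_beta_eq[OF beta_red_lift[OF s, of 0]]
    by (simp add: beta_eq_Abs beta_eq_AppL)
  also have "\<dots> =\<^sub>\<beta> Abs s"
    using beta_eq_Abs[OF beta_eq_redex[of "lift s 1" "Var 0"]] by (simp add: subst_lift_Var)
  also have "\<dots> =\<^sub>\<beta> E"
    using beta_eq_sym[OF beta_red_imp_beta_eq[OF s]] .
  finally show ?thesis .
qed

section \<open>Pairs, streams and the last-argument selector\<close>

definition K_term :: lterm where "K_term = Abs (Abs (Var 1))"
definition KI_term :: lterm where "KI_term = Abs (Abs (Var 0))"
definition hd_term :: lterm where "hd_term = Abs (App (Var 0) K_term)"
definition tl_term :: lterm where "tl_term = Abs (App (Var 0) KI_term)"

text \<open>Applied to \<open>church n\<close>, \<open>sel_last_term\<close> yields \<open>n K I = \<lambda>x\<^sub>0 \<dots> x\<^sub>n. x\<^sub>n\<close>.\<close>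
definition sel_last_term :: lterm where
  "sel_last_term = Abs (App (App (Var 0) K_term) Iterm)"

definition Eq_term :: lterm where
  "Eq_term = Abs (Abs (Abs (App hd_term
     (App (App (Var 2) tl_term) (App (App (Var 1) (App sel_last_term (Var 2))) (Var 0))))))"

lemma closed_terms [simp]:
  "closed K_term" "closed KI_term" "closed hd_term" "closed tl_term"
  "closed sel_last_term" "closed Iterm" "closed Omega" "closed (church n)"
proof -
  have "closed_at 2 ((App (Var 1) ^^ n) (Var 0))" by (induct n) auto
  then show "closed (church n)" by (simp add: closed_def church_def numeral_2_eq_2)
qed (auto simp: closed_def K_term_def KI_term_def hd_term_def tl_term_def
    sel_last_term_def Iterm_def Omega_def)

lemma closed_Eq_term: "closed Eq_term"
  using closed_terms unfolding Eq_term_def closed_def by (auto intro: closed_at_mono)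

lemma church_iter: "App (App (church n) f) a \<rightarrow>\<^sub>\<beta>\<^sup>* (App f ^^ n) a"
proof -
  have inner: "subst ((App (Var (Suc 0)) ^^ n) (Var 0)) (lift f 0) (Suc 0) = (App (lift f 0) ^^ n) (Var 0)"
    by (induct n) auto
  have outer: "subst ((App (lift f 0) ^^ n) (Var 0)) a 0 = (App f ^^ n) a"
    by (induct n) auto
  have "beta (App (App (church n) f) a) (App (Abs ((App (lift f 0) ^^ n) (Var 0))) a)"
    using beta.beta_appL[OF beta.beta_redex[of "Abs ((App (Var 1) ^^ n) (Var 0))" f]]
    by (simp add: church_def inner)
  moreover have "beta (App (Abs ((App (lift f 0) ^^ n) (Var 0))) a) ((App f ^^ n) a)"
    using beta.beta_redex[of "(App (lift f 0) ^^ n) (Var 0)" a] by (simp add: outer)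
  ultimately show ?thesis by auto
qed

lemma hd_lpair: "App hd_term (lpair A B) =\<^sub>\<beta> A"
proof -
  have "App hd_term (lpair A B) =\<^sub>\<beta> App (App K_term A) B"
    using beta_eq_redex[of "App (Var 0) K_term" "lpair A B"]
      beta_eq_redex[of "App (App (Var 0) (lift A 0)) (lift B 0)" K_term]
    by (simp add: hd_term_def lpair_def beta_eq_trans)
  also have "\<dots> =\<^sub>\<beta> App (Abs (lift A 0)) B"
    using beta_eq_AppL[OF beta_eq_redex[of "Abs (Var 1)" A]] by (simp add: K_term_def)
  also have "\<dots> =\<^sub>\<beta> A"
    using beta_eq_redex[of "lift A 0" B] by simp
  finally show ?thesis .
qed

lemma tl_lpair: "App tl_term (lpair A B) =\<^sub>\<beta> B"
proof -
  have "App tl_term (lpair A B) =\<^sub>\<beta> App (App KI_term A) B"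
    using beta_eq_redex[of "App (Var 0) KI_term" "lpair A B"]
      beta_eq_redex[of "App (App (Var 0) (lift A 0)) (lift B 0)" KI_term]
    by (simp add: tl_term_def lpair_def beta_eq_trans)
  also have "\<dots> =\<^sub>\<beta> App (Abs (Var 0)) B"
    using beta_eq_AppL[OF beta_eq_redex[of "Abs (Var 0)" A]] by (simp add: KI_term_def)
  also have "\<dots> =\<^sub>\<beta> B"
    using beta_eq_redex[of "Var 0" B] by simp
  finally show ?thesis .
qed

lemma stream_family_hd: "is_stream_family M S \<Longrightarrow> App hd_term (S k) =\<^sub>\<beta> M k"
  unfolding is_stream_family_def using beta_eq_AppR hd_lpair beta_eq_trans by blast

lemma stream_family_tl_iter:
  assumes "is_stream_family M S"
  shows "(App tl_term ^^ n) (S k) =\<^sub>\<beta> S (k + n)"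
proof (induct n)
  case (Suc n)
  have "App tl_term ((App tl_term ^^ n) (S k)) =\<^sub>\<beta> App tl_term (S (k + n))"
    using Suc beta_eq_AppR by blast
  also have "\<dots> =\<^sub>\<beta> App tl_term (lpair (M (k + n)) (S (Suc (k + n))))"
    using assms beta_eq_AppR unfolding is_stream_family_def by blast
  also have "\<dots> =\<^sub>\<beta> S (k + Suc n)"
    using tl_lpair by simp
  finally show ?case by simp
qed simp

lemma closed_at_lams_Var0: "0 < k + n \<Longrightarrow> closed_at k (lams n (Var 0))"
  by (induct n arbitrary: k) (auto simp: lams_def)

lemma closed_lams_Var0: "closed (lams (Suc n) (Var 0))"
  unfolding closed_def by (simp add: closed_at_lams_Var0)

lemma lams_Suc: "lams (Suc n) t = Abs (lams n t)"
  by (simp add: lams_def)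

lemma K_iter_Iterm: "(App K_term ^^ n) Iterm =\<^sub>\<beta> lams (Suc n) (Var 0)"
proof (induct n)
  case 0
  then show ?case by (simp add: lams_def Iterm_def)
next
  case (Suc n)
  then have "App K_term ((App K_term ^^ n) Iterm) =\<^sub>\<beta> App K_term (lams (Suc n) (Var 0))"
    by (simp add: beta_eq_AppR)
  also have "\<dots> =\<^sub>\<beta> lams (Suc (Suc n)) (Var 0)"
    using beta_eq_redex[of "Abs (Var 1)" "lams (Suc n) (Var 0)"]
      lift_closed_at[OF closed_at_lams_Var0[of 1 n]]
    by (simp add: K_term_def lams_Suc)
  finally show ?case by simp
qed

lemma sel_last_church: "App sel_last_term (church n) =\<^sub>\<beta> lams (Suc n) (Var 0)"
proof -
  have "App sel_last_term (church n) =\<^sub>\<beta> App (App (church n) K_term) Iterm"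
    using beta_eq_redex[of "App (App (Var 0) K_term) Iterm" "church n"]
    by (simp add: sel_last_term_def)
  also have "\<dots> =\<^sub>\<beta> (App K_term ^^ n) Iterm"
    by (rule beta_red_imp_beta_eq[OF church_iter])
  also have "\<dots> =\<^sub>\<beta> lams (Suc n) (Var 0)"
    by (rule K_iter_Iterm)
  finally show ?thesis .
qed

lemma apps_lams_Var0: "length args = n \<Longrightarrow> apps (lams (Suc n) (Var 0)) (args @ [x]) =\<^sub>\<beta> x"
proof (induct args arbitrary: n)
  case Nil
  then show ?case using beta_eq_redex[of "Var 0" x] by (simp add: apps_def lams_def)
next
  case (Cons a args)
  then obtain m where n: "n = Suc m" and m: "length args = m" by auto
  have "App (lams (Suc n) (Var 0)) a =\<^sub>\<beta> lams (Suc m) (Var 0)"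
    using beta_eq_redex[of "lams (Suc m) (Var 0)" a] closed_lams_Var0[of m]
    by (simp add: n lams_Suc[of "Suc m"])
  then have "apps (App (lams (Suc n) (Var 0)) a) (args @ [x]) =\<^sub>\<beta>
      apps (lams (Suc m) (Var 0)) (args @ [x])"
    by (rule beta_eq_apps)
  also have "\<dots> =\<^sub>\<beta> x" using Cons.hyps m .
  finally show ?case by (simp add: apps_def)
qed

lemma Eq_term_beta_eq:
  assumes "closed T"
    and S0: "S 0 =\<^sub>\<beta> App (App T (App sel_last_term (church n))) (Var 0)"
    and S: "is_stream_family
      (\<lambda>k. apps (App sel_last_term (church n)) (replicate k Omega @ [X k])) S"
  shows "App (App Eq_term (church n)) T =\<^sub>\<beta> Abs (X n)"
proof -
  have "App (App Eq_term (church n)) T =\<^sub>\<beta>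
      App (Abs (Abs (App hd_term (App (App (church n) tl_term)
        (App (App (Var 1) (App sel_last_term (church n))) (Var 0)))))) T"
    using beta_eq_AppL[OF beta_eq_redex[of "Abs (Abs (App hd_term (App (App (Var 2) tl_term)
      (App (App (Var 1) (App sel_last_term (Var 2))) (Var 0)))))" "church n"]]
    by (simp add: Eq_term_def numeral_2_eq_2)
  also have "\<dots> =\<^sub>\<beta> Abs (App hd_term (App (App (church n) tl_term)
      (App (App T (App sel_last_term (church n))) (Var 0))))"
    using beta_eq_redex[of "Abs (App hd_term (App (App (church n) tl_term)
      (App (App (Var 1) (App sel_last_term (church n))) (Var 0))))" T] \<open>closed T\<close>
    by simp
  also have "\<dots> =\<^sub>\<beta> Abs (X n)"
  proof (rule beta_eq_Abs)
    have "App hd_term (App (App (church n) tl_term)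
        (App (App T (App sel_last_term (church n))) (Var 0))) =\<^sub>\<beta>
        App hd_term (App (App (church n) tl_term) (S 0))"
      by (intro beta_eq_AppR beta_eq_sym[OF S0])
    also have "\<dots> =\<^sub>\<beta> App hd_term ((App tl_term ^^ n) (S 0))"
      by (intro beta_eq_AppR beta_red_imp_beta_eq church_iter)
    also have "\<dots> =\<^sub>\<beta> App hd_term (S n)"
      using stream_family_tl_iter[OF S, of n 0] by (simp add: beta_eq_AppR)
    also have "\<dots> =\<^sub>\<beta> apps (App sel_last_term (church n)) (replicate n Omega @ [X n])"
      using stream_family_hd[OF S] by simp
    also have "\<dots> =\<^sub>\<beta> apps (lams (Suc n) (Var 0)) (replicate n Omega @ [X n])"
      by (intro beta_eq_apps sel_last_church)
    also have "\<dots> =\<^sub>\<beta> X n"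
      by (simp add: apps_lams_Var0)
    finally show "App hd_term (App (App (church n) tl_term)
        (App (App T (App sel_last_term (church n))) (Var 0))) =\<^sub>\<beta> X n" .
  qed
  finally show ?thesis .
qed

theorem mainTheorem13:
  fixes etas :: "nat \<Rightarrow> lterm" and IOm etaOm :: lterm
  assumes etas_eff: "\<exists>F. closed F \<and> (\<forall>n. App F (church n) =\<^sub>\<beta> etas n)"
    and etas_closed: "\<forall>n. closed (etas n)"
    and etas_red: "\<forall>n. beta_eta_red (etas n) Iterm"
    and IOm_closed: "closed IOm"
    and IOm_spec: "\<forall>y x. \<exists>S. S 0 =\<^sub>\<beta> App (App IOm y) x \<and>
        is_stream_family (\<lambda>n. apps y (replicate n Omega @ [x])) S"
    and etaOm_closed: "closed etaOm"
    and etaOm_spec: "\<forall>y x. \<exists>S. S 0 =\<^sub>\<beta> App (App etaOm y) x \<and>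
        is_stream_family (\<lambda>n. apps y (replicate n Omega @ [App (etas n) x])) S"
  shows "\<exists>Eq. closed Eq \<and>
    (\<forall>n. App (App Eq (church n)) IOm =\<^sub>\<B> Iterm \<and>
         App (App Eq (church n)) etaOm =\<^sub>\<B> etas n)"
proof (intro exI conjI allI)
  show "closed Eq_term" by (rule closed_Eq_term)
  fix n
  let ?y = "App sel_last_term (church n)"
  obtain S where "S 0 =\<^sub>\<beta> App (App IOm ?y) (Var 0)"
    and "is_stream_family (\<lambda>k. apps ?y (replicate k Omega @ [Var 0])) S"
    using IOm_spec by blast
  then have "App (App Eq_term (church n)) IOm =\<^sub>\<beta> Iterm"
    using Eq_term_beta_eq[OF IOm_closed, where X="\<lambda>_. Var 0"] unfolding Iterm_def by blast
  then show "App (App Eq_term (church n)) IOm =\<^sub>\<B> Iterm"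
    by (rule beta_eq_imp_B_eq)
  obtain S' where "S' 0 =\<^sub>\<beta> App (App etaOm ?y) (Var 0)"
    and "is_stream_family (\<lambda>k. apps ?y (replicate k Omega @ [App (etas k) (Var 0)])) S'"
    using etaOm_spec by blast
  then have "App (App Eq_term (church n)) etaOm =\<^sub>\<beta> Abs (App (etas n) (Var 0))"
    using Eq_term_beta_eq[OF etaOm_closed, where X="\<lambda>k. App (etas k) (Var 0)"] by blast
  also have "\<dots> =\<^sub>\<beta> etas n"
    using eta_expansion_beta_eq[of "etas n" "Var 0"] etas_closed etas_red
    by (simp add: Iterm_def)
  finally show "App (App Eq_term (church n)) etaOm =\<^sub>\<B> etas n"
    by (rule beta_eq_imp_B_eq)
qed

end
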